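(* Let $(\mathfrak{g}_\sigma,\mathfrak{q})$ be a reductive $CR$-algebra with invariant complement $\mathfrak{q}^c$. Then every element $Z\in\sigma(\mathfrak{q})\setminus\mathfrak{q}$ of finite Levi-order admits a Levi-sequence of minimal length all of whose elements belong to $\mathfrak{q}\cap\sigma(\mathfrak{q}^c)$.
   Context: $\mathfrak{g}$ is a finite-dimensional complex Lie algebra, $\sigma$ an anti-$\mathbb{C}$-linear involution, $\mathfrak{g}_\sigma$ its fixed points; $(\mathfrak{g}_\sigma,\mathfrak{q})$ with $\mathfrak{q}$ a complex subalgebra of $\mathfrak{g}$ is a $CR$-algebra. It is reductive if there is a $\mathbb{C}$-linear complement $\mathfrak{q}^c$ of $\mathfrak{q}$ in $\mathfrak{g}$ (an invariant complement) with $[\mathfrak{q}\cap\sigma(\mathfrak{q}),\mathfrak{q}^c]\subseteq\mathfrak{q}^c$ and $\mathfrak{g}=(\mathfrak{q}\cap\sigma(\mathfrak{q}))\oplus(\mathfrak{q}\cap\sigma(\mathfrak{q}^c))\oplus(\mathfrak{q}^c\cap\sigma(\mathfrak{q}))\oplus(\mathfrak{q}^c\cap\sigma(\mathfrak{q}^c))$. Higher order commutators: $[X_1,\dots,X_h]=[[X_1,\dots,X_{h-1}],X_h]$. For $Z\in\sigma(\mathfrak{q})\setminus\mathfrak{q}$, a Levi-sequence is $(Z_1,\dots,Z_k)$ in $\mathfrak{q}$ with $[Z,Z_1,\dots,Z_k]\notin\mathfrak{q}+\sigma(\mathfrak{q})$; the Levi-order of $Z$ is the minimal length of a Levi-sequence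 ($+\infty$ if none exists). *)

theory Defs
  imports "HOL-Analysis.Analysis" "HOL-Library.Extended_Nat"
begin

definition complex_lie_algebra ::
  "(complex \<Rightarrow> 'g::ab_group_add \<Rightarrow> 'g) \<Rightarrow> ('g \<Rightarrow> 'g \<Rightarrow> 'g) \<Rightarrow> bool" where
  "complex_lie_algebra smul br \<longleftrightarrow>
     vector_space smul \<and>
     (\<exists>B. finite B \<and> module.span smul B = UNIV) \<and>
     (\<forall>x y z. br (x + y) z = br x z + br y z) \<and>
     (\<forall>x y z. br x (y + z) = br x y + br x z) \<and>
     (\<forall>c x y. br (smul c x) y = smul c (br x y)) \<and>
     (\<forall>c x y. br x (smul c y) = smul c (br x y)) \<and>
     (\<forall>x. br x x = 0) \<and>
     (\<forall>x y z. br x (br y z) + br y (br z x) + br z (br x y) = 0)"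

text \<open>Anti-C-linear involution of the Lie algebra (a conjugation, i.e. also
compatible with the bracket, so that its fixed points form a real form).\<close>

definition anti_linear_involution ::
  "(complex \<Rightarrow> 'g::ab_group_add \<Rightarrow> 'g) \<Rightarrow> ('g \<Rightarrow> 'g \<Rightarrow> 'g) \<Rightarrow> ('g \<Rightarrow> 'g) \<Rightarrow> bool" where
  "anti_linear_involution smul br \<sigma> \<longleftrightarrow>
     (\<forall>x y. \<sigma> (x + y) = \<sigma> x + \<sigma> y) \<and>
     (\<forall>c x. \<sigma> (smul c x) = smul (cnj c) (\<sigma> x)) \<and>
     (\<forall>x. \<sigma> (\<sigma> x) = x) \<and>
     (\<forall>x y. \<sigma> (br x y) = br (\<sigma> x) (\<sigma> y))"

definition complex_subalgebra ::
  "(complex \<Rightarrow> 'g::ab_group_add \<Rightarrow> 'g) \<Rightarrow> ('g \<Rightarrow> 'g \<Rightarrow> 'g) \<Rightarrow> 'g set \<Rightarrow> bool" where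
  "complex_subalgebra smul br q \<longleftrightarrow>
     module.subspace smul q \<and> (\<forall>x\<in>q. \<forall>y\<in>q. br x y \<in> q)"

definition setsum2 :: "'g::ab_group_add set \<Rightarrow> 'g set \<Rightarrow> 'g set" where
  "setsum2 A B = {a + b | a b. a \<in> A \<and> b \<in> B}"

definition direct_sum4 :: "'g::ab_group_add set \<Rightarrow> 'g set \<Rightarrow> 'g set \<Rightarrow> 'g set \<Rightarrow> bool" where
  "direct_sum4 A B C D \<longleftrightarrow>
     (\<forall>x. \<exists>!(a, b, c, d). a \<in> A \<and> b \<in> B \<and> c \<in> C \<and> d \<in> D \<and> x = a + b + c + d)"

definition invariant_complement ::
  "(complex \<Rightarrow> 'g::ab_group_add \<Rightarrow> 'g) \<Rightarrow> ('g \<Rightarrow> 'g \<Rightarrow> 'g) \<Rightarrow> ('g \<Rightarrow> 'g)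
     \<Rightarrow> 'g set \<Rightarrow> 'g set \<Rightarrow> bool" where
  "invariant_complement smul br \<sigma> q qc \<longleftrightarrow>
     module.subspace smul qc \<and> q \<inter> qc = {0} \<and> setsum2 q qc = UNIV \<and>
     (\<forall>x\<in>q \<inter> \<sigma> ` q. \<forall>y\<in>qc. br x y \<in> qc) \<and>
     direct_sum4 (q \<inter> \<sigma> ` q) (q \<inter> \<sigma> ` qc) (qc \<inter> \<sigma> ` q) (qc \<inter> \<sigma> ` qc)"

definition hcomm :: "('g \<Rightarrow> 'g \<Rightarrow> 'g) \<Rightarrow> 'g \<Rightarrow> 'g list \<Rightarrow> 'g" where
  "hcomm br Z zs = foldl br Z zs"

definition levi_sequence ::
  "('g::ab_group_add \<Rightarrow> 'g \<Rightarrow> 'g) \<Rightarrow> ('g \<Rightarrow> 'g) \<Rightarrow> 'g set \<Rightarrow> 'g \<Rightarrow> 'g list \<Rightarrow> bool" where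
  "levi_sequence br \<sigma> q Z zs \<longleftrightarrow>
     set zs \<subseteq> q \<and> hcomm br Z zs \<notin> setsum2 q (\<sigma> ` q)"

definition levi_order ::
  "('g::ab_group_add \<Rightarrow> 'g \<Rightarrow> 'g) \<Rightarrow> ('g \<Rightarrow> 'g) \<Rightarrow> 'g set \<Rightarrow> 'g \<Rightarrow> enat" where
  "levi_order br \<sigma> q Z =
     (if \<exists>zs. levi_sequence br \<sigma> q Z zs
      then enat (LEAST n. \<exists>zs. levi_sequence br \<sigma> q Z zs \<and> length zs = n)
      else \<infinity>)"

end

theory Submission
  imports Defs
begin

text \<open>Since \<open>q \<inter> qc = 0\<close>, the four-fold decomposition of the Lie algebra gives
\<open>q = (q \<inter> \<sigma> q) + (q \<inter> \<sigma> qc)\<close>. Replace the entries of a minimal Levi-sequence, from left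
to right, by their \<open>q \<inter> \<sigma> qc\<close>-components. The higher commutator is additive in each entry,
so it suffices that inserting some \<open>A \<in> q \<inter> \<sigma> q\<close> into a sequence of total length at most
the Levi-order gives an element of \<open>q + \<sigma> q\<close>: by the Jacobi identity \<open>A\<close> can be moved to the
right end at the cost of shorter commutators, which lie in \<open>q + \<sigma> q\<close> by minimality, and
\<open>ad A\<close> preserves \<open>q + \<sigma> q\<close>.\<close>

locale lie_ring =
  fixes br :: "'g::ab_group_add \<Rightarrow> 'g \<Rightarrow> 'g"
  assumes add_left: "br (x + y) z = br x z + br y z"
    and add_right: "br x (y + z) = br x y + br x z"
    and alternating: "br x x = 0"
    and jacobi: "br x (br y z) + br y (br z x) + br z (br x y) = 0"
begin

lemma anticommute: "br x y = - br y x"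
proof -
  have "br x y + br y x = br (x + y) (x + y)"
    by (simp add: add_left add_right alternating[of x] alternating[of y])
  also have "\<dots> = 0" by (rule alternating)
  finally show ?thesis by (simp add: eq_neg_iff_add_eq_0)
qed

lemma zero_left: "br 0 y = 0"
  using add_left[of 0 0 y] by simp

lemma minus_left: "br (- x) y = - br x y"
  using add_left[of "- x" x y] by (simp add: zero_left eq_neg_iff_add_eq_0)

lemma derivation_right: "br (br x y) z = br (br x z) y + br x (br y z)"
proof -
  have "br (br x y) z = br x (br y z) + br y (br z x)"
    using jacobi[of x y z] by (simp add: anticommute[of z "br x y"] eq_neg_iff_add_eq_0)
  also have "br y (br z x) = br (br x z) y"
    by (simp add: anticommute[of y] anticommute[of z x] minus_left)
  finally show ?thesis by (simp add: add.commute)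
qed

lemma hcomm_add_base: "hcomm br (u + v) ys = hcomm br u ys + hcomm br v ys"
  by (induction ys arbitrary: u v) (simp_all add: hcomm_def add_left)

lemma hcomm_add_entry:
  "hcomm br Z (xs @ (a + b) # ys) = hcomm br Z (xs @ a # ys) + hcomm br Z (xs @ b # ys)"
  by (simp add: hcomm_def add_right flip: hcomm_add_base[unfolded hcomm_def])

end

lemma complex_lie_algebra_imp_lie_ring: "complex_lie_algebra smul br \<Longrightarrow> lie_ring br"
  unfolding complex_lie_algebra_def by unfold_locales blast+

lemma direct_sum4_decompose:
  assumes "direct_sum4 A B C D"
  obtains a b c d where "a \<in> A" "b \<in> B" "c \<in> C" "d \<in> D" "x = a + b + c + d"
proof -
  from assms have "\<exists>p. case p of (a, b, c, d) \<Rightarrow> a \<in> A \<and> b \<in> B \<and> c \<in> C \<and> d \<in> D \<and> x = a + b + c + d"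
    unfolding direct_sum4_def by (intro ex1_implies_ex) (rule spec)
  then obtain p where "case p of (a, b, c, d) \<Rightarrow> a \<in> A \<and> b \<in> B \<and> c \<in> C \<and> d \<in> D \<and> x = a + b + c + d" ..
  with that show ?thesis by (cases p) auto
qed

lemma invariant_complement_split:
  assumes "vector_space smul" and "module.subspace smul q"
    and "invariant_complement smul br \<sigma> q qc" and "y \<in> q"
  shows "\<exists>a\<in>q \<inter> \<sigma> ` q. \<exists>b\<in>q \<inter> \<sigma> ` qc. y = a + b"
proof -
  have qc: "module.subspace smul qc" and disjoint: "q \<inter> qc = {0}"
    and sum4: "direct_sum4 (q \<inter> \<sigma> ` q) (q \<inter> \<sigma> ` qc) (qc \<inter> \<sigma> ` q) (qc \<inter> \<sigma> ` qc)"
    using assms(3) unfolding invariant_complement_def by blast+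
  interpret vector_space smul by fact
  obtain a b c d where abcd: "a \<in> q \<inter> \<sigma> ` q" "b \<in> q \<inter> \<sigma> ` qc"
    "c \<in> qc \<inter> \<sigma> ` q" "d \<in> qc \<inter> \<sigma> ` qc" and y: "y = a + b + c + d"
    by (rule direct_sum4_decompose[OF sum4])
  have "c + d = y - (a + b)" using y by (simp add: algebra_simps)
  also have "\<dots> \<in> q"
    using abcd(1,2) \<open>y \<in> q\<close> subspace_diff subspace_add assms(2) by blast
  finally have "c + d = 0"
    using disjoint subspace_add[OF qc] abcd(3,4) by blast
  then have "y = a + b" using y by (simp add: add.assoc)
  then show ?thesis using abcd(1,2) by blast
qed

lemma levi_order_attained:
  assumes "levi_order br \<sigma> q Z \<noteq> \<infinity>"
  obtains zs where "levi_sequence br \<sigma> q Z zs" "enat (length zs) = levi_order br \<sigma> q Z"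
proof -
  let ?P = "\<lambda>n. \<exists>zs. levi_sequence br \<sigma> q Z zs \<and> length zs = n"
  have ex: "\<exists>zs. levi_sequence br \<sigma> q Z zs"
    using assms by (rule contrapos_np) (simp add: levi_order_def)
  then have order: "levi_order br \<sigma> q Z = enat (LEAST n. ?P n)"
    by (simp add: levi_order_def)
  from ex have "\<exists>n. ?P n" by blast
  from LeastI_ex[OF this] obtain zs
    where "levi_sequence br \<sigma> q Z zs" "length zs = (LEAST n. ?P n)" by blast
  with that show ?thesis by (simp add: order)
qed

lemma hcomm_in_q_plus_\<sigma>q_if_shorter:
  assumes "set ys \<subseteq> q" and "enat (length ys) < levi_order br \<sigma> q Z"
  shows "hcomm br Z ys \<in> setsum2 q (\<sigma> ` q)"
proof (rule ccontr)
  assume "hcomm br Z ys \<notin> setsum2 q (\<sigma> ` q)"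
  then have "levi_sequence br \<sigma> q Z ys" using assms(1) unfolding levi_sequence_def by blast
  then have "levi_order br \<sigma> q Z \<le> enat (length ys)"
    unfolding levi_order_def by (auto intro: Least_le)
  then show False using assms(2) leD by blast
qed

locale cr_bracket = lie_ring br
  for br :: "'g::ab_group_add \<Rightarrow> 'g \<Rightarrow> 'g" +
  fixes \<sigma> :: "'g \<Rightarrow> 'g" and q :: "'g set"
  assumes \<sigma>_add: "\<sigma> (x + y) = \<sigma> x + \<sigma> y"
    and \<sigma>_involutive: "\<sigma> (\<sigma> x) = x"
    and \<sigma>_br: "\<sigma> (br x y) = br (\<sigma> x) (\<sigma> y)"
    and q_add: "x \<in> q \<Longrightarrow> y \<in> q \<Longrightarrow> x + y \<in> q"
    and q_br: "x \<in> q \<Longrightarrow> y \<in> q \<Longrightarrow> br x y \<in> q"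
begin

abbreviation q_plus_\<sigma>q :: "'g set" where
  "q_plus_\<sigma>q \<equiv> setsum2 q (\<sigma> ` q)"

lemma q_plus_\<sigma>q_add:
  assumes "x \<in> q_plus_\<sigma>q" and "y \<in> q_plus_\<sigma>q"
  shows "x + y \<in> q_plus_\<sigma>q"
proof -
  obtain u v u' v' where "u \<in> q" "v \<in> q" "u' \<in> q" "v' \<in> q"
    and "x = u + \<sigma> v" "y = u' + \<sigma> v'"
    using assms unfolding setsum2_def by blast
  then have "x + y = (u + u') + \<sigma> (v + v')" "u + u' \<in> q" "v + v' \<in> q"
    by (simp_all add: \<sigma>_add q_add algebra_simps)
  then show ?thesis unfolding setsum2_def by blast
qed

lemma q_plus_\<sigma>q_br:
  assumes "x \<in> q_plus_\<sigma>q" and "A \<in> q \<inter> \<sigma> ` q"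
  shows "br x A \<in> q_plus_\<sigma>q"
proof -
  obtain u v where uv: "u \<in> q" "v \<in> q" "x = u + \<sigma> v"
    using assms(1) unfolding setsum2_def by blast
  obtain A' where A': "A' \<in> q" "A = \<sigma> A'" using assms(2) by blast
  have "br x A = br u A + \<sigma> (br v A')" using uv A' by (simp add: add_left \<sigma>_br)
  moreover have "br u A \<in> q" "br v A' \<in> q" using q_br uv A' assms(2) by auto
  ultimately show ?thesis unfolding setsum2_def by blast
qed

lemma hcomm_insert_in_q_plus_\<sigma>q:
  assumes "set xs \<subseteq> q" "set ys \<subseteq> q" "A \<in> q \<inter> \<sigma> ` q"
    and "enat (length xs + length ys) < levi_order br \<sigma> q Z"
  shows "hcomm br Z (xs @ A # ys) \<in> q_plus_\<sigma>q"
  using assms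
proof (induction ys arbitrary: xs)
  case Nil
  then have "hcomm br Z xs \<in> q_plus_\<sigma>q" by (simp add: hcomm_in_q_plus_\<sigma>q_if_shorter)
  with Nil.prems(3) show ?case by (simp add: hcomm_def q_plus_\<sigma>q_br)
next
  case (Cons y ys)
  have "hcomm br Z (xs @ A # y # ys)
      = hcomm br Z ((xs @ [y]) @ A # ys) + hcomm br Z (xs @ br A y # ys)"
    by (simp add: hcomm_def derivation_right[of _ A y] flip: hcomm_add_base[unfolded hcomm_def])
  moreover have "hcomm br Z ((xs @ [y]) @ A # ys) \<in> q_plus_\<sigma>q"
    using Cons.prems by (intro Cons.IH) auto
  moreover have "hcomm br Z (xs @ br A y # ys) \<in> q_plus_\<sigma>q"
    using Cons.prems q_br by (intro hcomm_in_q_plus_\<sigma>q_if_shorter) auto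
  ultimately show ?case by (simp add: q_plus_\<sigma>q_add)
qed

lemma minimal_levi_sequence_from_prefix:
  assumes split: "\<And>y. y \<in> q \<Longrightarrow> \<exists>a\<in>q \<inter> \<sigma> ` q. \<exists>b\<in>P. y = a + b" and "P \<subseteq> q"
    and "set xs \<subseteq> P" and "levi_sequence br \<sigma> q Z (xs @ ys)"
    and "enat (length (xs @ ys)) = levi_order br \<sigma> q Z"
  shows "\<exists>zs. levi_sequence br \<sigma> q Z zs \<and> length zs = length (xs @ ys) \<and> set zs \<subseteq> P"
  using assms(3-)
proof (induction ys arbitrary: xs)
  case Nil
  then show ?case by auto
next
  case (Cons y ys)
  have q: "set xs \<subseteq> q" "y \<in> q" "set ys \<subseteq> q"
    using Cons.prems \<open>P \<subseteq> q\<close> unfolding levi_sequence_def by auto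
  obtain a b where ab: "a \<in> q \<inter> \<sigma> ` q" "b \<in> P" "y = a + b" using split q(2) by blast
  have "enat (length xs + length ys) < levi_order br \<sigma> q Z"
    unfolding Cons.prems(3)[symmetric] by simp
  then have "hcomm br Z (xs @ a # ys) \<in> q_plus_\<sigma>q"
    using q ab(1) by (intro hcomm_insert_in_q_plus_\<sigma>q)
  moreover have "hcomm br Z (xs @ y # ys) \<notin> q_plus_\<sigma>q"
    using Cons.prems(2) unfolding levi_sequence_def by simp
  ultimately have "hcomm br Z ((xs @ [b]) @ ys) \<notin> q_plus_\<sigma>q"
    unfolding ab(3) hcomm_add_entry using q_plus_\<sigma>q_add by auto
  then have "levi_sequence br \<sigma> q Z ((xs @ [b]) @ ys)"
    using q ab(2) \<open>P \<subseteq> q\<close> unfolding levi_sequence_def by auto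
  with Cons.prems(1,3) ab(2) show ?case
    using Cons.IH[of "xs @ [b]"] by simp
qed

lemma minimal_levi_sequence_within:
  assumes "\<And>y. y \<in> q \<Longrightarrow> \<exists>a\<in>q \<inter> \<sigma> ` q. \<exists>b\<in>P. y = a + b" and "P \<subseteq> q"
    and "levi_order br \<sigma> q Z \<noteq> \<infinity>"
  shows "\<exists>zs. levi_sequence br \<sigma> q Z zs \<and> enat (length zs) = levi_order br \<sigma> q Z
           \<and> set zs \<subseteq> P"
proof -
  obtain zs where zs: "levi_sequence br \<sigma> q Z zs" "enat (length zs) = levi_order br \<sigma> q Z"
    using levi_order_attained[OF assms(3)] by blast
  have "\<exists>zs'. levi_sequence br \<sigma> q Z zs' \<and> length zs' = length ([] @ zs) \<and> set zs' \<subseteq> P"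
    using zs by (intro minimal_levi_sequence_from_prefix[OF assms(1,2)]) simp_all
  then show ?thesis using zs(2) by auto
qed

end

lemma cr_bracketI:
  assumes "complex_lie_algebra smul br" and "anti_linear_involution smul br \<sigma>"
    and "complex_subalgebra smul br q"
  shows "cr_bracket br \<sigma> q"
proof (rule cr_bracket.intro)
  show "lie_ring br" using assms(1) by (rule complex_lie_algebra_imp_lie_ring)
  interpret vector_space smul using assms(1) unfolding complex_lie_algebra_def by blast
  have "subspace q" and "\<forall>x\<in>q. \<forall>y\<in>q. br x y \<in> q"
    using assms(3) unfolding complex_subalgebra_def by blast+
  then show "cr_bracket_axioms br \<sigma> q" using assms(2) unfolding anti_linear_involution_def
    by unfold_locales (simp_all add: subspace_add)
qed

theorem lemma3p10:
  fixes smul :: "complex \<Rightarrow> 'g::ab_group_add \<Rightarrow> 'g"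
    and br :: "'g \<Rightarrow> 'g \<Rightarrow> 'g"
    and \<sigma> :: "'g \<Rightarrow> 'g"
    and q qc :: "'g set"
    and Z :: 'g
  assumes "complex_lie_algebra smul br"
    and "anti_linear_involution smul br \<sigma>"
    and "complex_subalgebra smul br q"
    and "invariant_complement smul br \<sigma> q qc"
    and "Z \<in> \<sigma> ` q - q"
    and "levi_order br \<sigma> q Z \<noteq> \<infinity>"
  shows "\<exists>zs. levi_sequence br \<sigma> q Z zs \<and> enat (length zs) = levi_order br \<sigma> q Z
             \<and> set zs \<subseteq> q \<inter> \<sigma> ` qc"
proof -
  interpret cr_bracket br \<sigma> q using assms(1-3) by (rule cr_bracketI)
  have "vector_space smul" and "module.subspace smul q"
    using assms(1,3) unfolding complex_lie_algebra_def complex_subalgebra_def by blast+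
  then have "\<And>y. y \<in> q \<Longrightarrow> \<exists>a\<in>q \<inter> \<sigma> ` q. \<exists>b\<in>q \<inter> \<sigma> ` qc. y = a + b"
    using assms(4) by (rule invariant_complement_split)
  then show ?thesis by (rule minimal_levi_sequence_within) (use assms(6) in blast)+
qed

end
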